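(* Let $T$ be a $(2n-1)$-universal tree. Let $T'$ be any binary rooted tree with $n$ leaves and no degree-1 nodes, and let $c:\mathsf{inner}(T')\to\{0,1\}$ be any assignment. Then there is an injective map $f$ from the nodes of $T'$ to the nodes of $T$ with the following properties: - $f(\mathsf{NCA}(u,v))=\mathsf{NCA}(f(u),f(v))$ for all $u,v$; - every inner node $v$ with $c(v)=0$ is mapped to a node of even depth; - every inner node $v$ with $c(v)=1$ is mapped to a node of odd depth. That is, $T$ is a parity-constrained minor-universal tree for binary trees with $n$ leaves and no degree-1 nodes.
   Context: Trees are rooted; depth is the distance from the root (the root has depth 0); degree is the number of children; $\mathsf{inner}(T')$ is the set of non-leaf nodes of $T'$. $\mathsf{NCA}$ denotes the nearest common ancestor. Cutting: select nodes $a,b$ with $a$ a child of $b$, and remove the subtree rooted at $a$ together with the edge $ab$. Contraction: select an internal node $b$ with parent $a$ and exactly one child $c$, and remove $b$. If $c$ is internal, the children of $c$ become children of $a$ and $c$ is removed. If $c$ is a leaf, it becomes a child of $a$. $T$ implements $T'$ if $T'$ can be obtained (up to isomorphism) from $T$ by a sequence of these operations. $T$ is $m$-universal if it implements every rooted tree with at most $m$ leaves and no degree-1 nodes. *)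

theory Defs
  imports Main
begin

text \<open>Finite rooted trees; children are kept in a list, but trees are only
compared up to isomorphism (arbitrary reordering of children).
Nodes are addressed by positions: lists of child indices from the root.\<close>

datatype rtree = Nd "rtree list"

fun kids :: "rtree \<Rightarrow> rtree list" where
  "kids (Nd ts) = ts"

fun valid :: "rtree \<Rightarrow> nat list \<Rightarrow> bool" where
  "valid t [] = True"
| "valid (Nd ts) (i # p) = (i < length ts \<and> valid (ts ! i) p)"

definition pos :: "rtree \<Rightarrow> nat list set" where
  "pos t = {p. valid t p}"

fun subt :: "rtree \<Rightarrow> nat list \<Rightarrow> rtree" where
  "subt t [] = t"
| "subt (Nd ts) (i # p) = (if i < length ts then subt (ts ! i) p else Nd [])"

definition depth :: "nat list \<Rightarrow> nat" where
  "depth p = length p"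

definition degree :: "rtree \<Rightarrow> nat list \<Rightarrow> nat" where
  "degree t p = length (kids (subt t p))"

definition leaves :: "rtree \<Rightarrow> nat list set" where
  "leaves t = {p \<in> pos t. degree t p = 0}"

definition inner :: "rtree \<Rightarrow> nat list set" where
  "inner t = {p \<in> pos t. degree t p \<noteq> 0}"

definition no_deg1 :: "rtree \<Rightarrow> bool" where
  "no_deg1 t \<longleftrightarrow> (\<forall>p \<in> pos t. degree t p \<noteq> 1)"

definition binary :: "rtree \<Rightarrow> bool" where
  "binary t \<longleftrightarrow> (\<forall>p \<in> pos t. degree t p \<le> 2)"

fun nca :: "nat list \<Rightarrow> nat list \<Rightarrow> nat list" where
  "nca (i # p) (j # q) = (if i = j then i # nca p q else [])"
| "nca _ _ = []"

inductive tiso :: "rtree \<Rightarrow> rtree \<Rightarrow> bool" where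
  "bij_betw \<sigma> {..<length ts} {..<length us} \<Longrightarrow>
   (\<forall>i < length ts. tiso (ts ! i) (us ! \<sigma> i)) \<Longrightarrow> tiso (Nd ts) (Nd us)"

text \<open>Contraction at node b (the i-th child of a) with exactly one child c:
if c is a leaf, b is replaced by c; if c is internal, b and c are removed and the
children of c become children of a.\<close>
inductive op_step :: "rtree \<Rightarrow> rtree \<Rightarrow> bool" where
  cut: "i < length ts \<Longrightarrow> op_step (Nd ts) (Nd (take i ts @ drop (Suc i) ts))"
| contr_leaf: "i < length ts \<Longrightarrow> ts ! i = Nd [Nd []] \<Longrightarrow>
     op_step (Nd ts) (Nd (ts[i := Nd []]))"
| contr_inner: "i < length ts \<Longrightarrow> ts ! i = Nd [Nd cs] \<Longrightarrow> cs \<noteq> [] \<Longrightarrow>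
     op_step (Nd ts) (Nd (take i ts @ cs @ drop (Suc i) ts))"
| deep: "i < length ts \<Longrightarrow> op_step (ts ! i) t \<Longrightarrow> op_step (Nd ts) (Nd (ts[i := t]))"

definition implements :: "rtree \<Rightarrow> rtree \<Rightarrow> bool" where
  "implements T T' \<longleftrightarrow> (\<exists>S. op_step\<^sup>*\<^sup>* T S \<and> tiso S T')"

definition universal :: "nat \<Rightarrow> rtree \<Rightarrow> bool" where
  "universal m T \<longleftrightarrow>
     (\<forall>T'. card (leaves T') \<le> m \<and> no_deg1 T' \<longrightarrow> implements T T')"

end

theory Submission
  imports Defs "HOL-Library.Sublist"
begin

text \<open>A parity request on an inner node can be met by hanging it one level lower, under a new
  node that also receives a new leaf. Doing this in the binary tree \<open>T'\<close> (with \<open>n - 1\<close> inner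
  nodes) gives a tree without degree-1 nodes and at most \<open>2n - 1\<close> leaves, which \<open>T\<close> therefore
  implements.

  Each cut, contraction and isomorphism is reversed by a map from the resulting tree into the
  original one that keeps the depth parity of inner nodes and moves nearest common ancestors only
  upwards, by an even number of levels. Composing these maps gives such a map from \<open>T'\<close> into
  \<open>T\<close> realising the requested parities. Since \<open>T'\<close> is binary, sending each inner node instead to
  the nearest common ancestor of the images of its two children makes the map preserve nearest
  common ancestors exactly, without changing any parity.\<close>

lemma prefix_nca_left: "prefix (nca u v) u"
  by (induction u v rule: nca.induct) auto

lemma prefix_nca_right: "prefix (nca u v) v"
  by (induction u v rule: nca.induct) auto

lemma nca_commute: "nca u v = nca v u"
  by (induction u v rule: nca.induct) auto

lemma nca_append_same: "nca (x @ a) (x @ b) = x @ nca a b"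
  by (induction x) auto

lemma nca_prefix_eq: "prefix u v \<Longrightarrow> nca u v = u"
  using nca_append_same[of u "[]"] by (auto simp: prefix_def)

lemma parallel_append_same: "x @ a \<parallel> x @ b \<longleftrightarrow> a \<parallel> b"
  by (induction x) (auto simp: parallel_def)

lemma parallel_Cons_iff: "a # x \<parallel> a # y \<longleftrightarrow> x \<parallel> y"
  using parallel_append_same[of "[a]"] by simp

lemma parallel_extend: "a \<parallel> b \<Longrightarrow> prefix a a' \<Longrightarrow> prefix b b' \<Longrightarrow> a' \<parallel> b'"
  by (auto simp: prefix_def parallel_append)

lemma parallel_nca_decomp:
  assumes "u \<parallel> v"
  obtains a b x y where "a \<noteq> b" "u = nca u v @ a # x" "v = nca u v @ b # y"
proof -
  obtain w a x b y where wab: "a \<noteq> b" "u = w @ a # x" "v = w @ b # y"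
    using parallel_decomp[OF assms] by iprover
  then have "nca u v = w"
    using nca_append_same[of w "a # x" "b # y"] by simp
  then have "u = nca u v @ a # x" "v = nca u v @ b # y"
    using wab(2,3) by simp_all
  then show thesis
    using that[OF wab(1)] by blast
qed

lemma strict_prefix_nca_left: "u \<parallel> v \<Longrightarrow> strict_prefix (nca u v) u"
  using prefix_nca_left[of u v] prefix_nca_right[of u v]
  by (auto simp: strict_prefix_def parallel_def)

lemma strict_prefix_nca_right: "u \<parallel> v \<Longrightarrow> strict_prefix (nca u v) v"
  using prefix_nca_left[of u v] prefix_nca_right[of u v]
  by (auto simp: strict_prefix_def parallel_def)

lemma nca_parallel_extend:
  assumes "prefix u u'" "prefix v v'" "u \<parallel> v"
  shows "nca u' v' = nca u v"
proof -
  obtain w a x b y where "a \<noteq> b" "u = w @ a # x" "v = w @ b # y"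
    using parallel_decomp[OF assms(3)] by blast
  moreover obtain x' y' where "u' = u @ x'" "v' = v @ y'"
    using assms(1,2) by (auto simp: prefix_def)
  ultimately show ?thesis
    by (simp add: nca_append_same)
qed

lemma subt_Nd_Nil: "subt (Nd []) q = Nd []"
  by (cases q) auto

lemma subt_append: "subt t (p @ q) = subt (subt t p) q"
proof (induction p arbitrary: t)
  case (Cons i p)
  then show ?case by (cases t) (auto simp: subt_Nd_Nil)
qed simp

lemma valid_append: "valid t (p @ q) \<longleftrightarrow> valid t p \<and> valid (subt t p) q"
proof (induction p arbitrary: t)
  case (Cons i p)
  then show ?case by (cases t) auto
qed simp

lemma valid_Cons_kids: "valid t (j # q) \<longleftrightarrow> j < length (kids t) \<and> valid (kids t ! j) q"
  by (cases t) auto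

lemma valid_snoc: "valid t (p @ [k]) \<longleftrightarrow> valid t p \<and> k < degree t p"
  by (simp add: valid_append valid_Cons_kids degree_def)

lemma Nil_in_pos [simp]: "[] \<in> pos t"
  by (simp add: pos_def)

lemma pos_Cons: "j # q \<in> pos (Nd bs) \<longleftrightarrow> j < length bs \<and> q \<in> pos (bs ! j)"
  by (simp add: pos_def)

lemma pos_append: "p @ q \<in> pos t \<longleftrightarrow> p \<in> pos t \<and> q \<in> pos (subt t p)"
  by (simp add: pos_def valid_append)

lemma pos_prefix: "p \<in> pos t \<Longrightarrow> prefix q p \<Longrightarrow> q \<in> pos t"
  by (auto simp: prefix_def pos_append)

lemma pos_nca: "u \<in> pos t \<Longrightarrow> nca u v \<in> pos t"
  using pos_prefix prefix_nca_left by blast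

lemma degree_Cons: "j < length bs \<Longrightarrow> degree (Nd bs) (j # q) = degree (bs ! j) q"
  by (simp add: degree_def)

lemma inner_Nil: "[] \<in> inner t \<longleftrightarrow> kids t \<noteq> []"
  by (simp add: inner_def degree_def)

lemma inner_Cons: "j # q \<in> inner (Nd bs) \<longleftrightarrow> j < length bs \<and> q \<in> inner (bs ! j)"
  by (auto simp: inner_def pos_Cons degree_Cons)

lemma inner_append: "p @ q \<in> inner t \<longleftrightarrow> p \<in> pos t \<and> q \<in> inner (subt t p)"
  by (auto simp: inner_def pos_append degree_def subt_append)

lemma kids_nonempty_if_inner: "q \<in> inner t \<Longrightarrow> kids t \<noteq> []"
  by (cases q; cases t) (auto simp: inner_def pos_def degree_def)

lemma strict_prefix_inner:
  assumes "p \<in> pos t" "strict_prefix q p"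
  shows "q \<in> inner t"
proof -
  obtain a r where "p = q @ a # r"
    using assms(2) by (metis prefix_def strict_prefix_def self_append_conv neq_Nil_conv)
  then have "q \<in> pos t" "valid (subt t q) (a # r)"
    using assms(1) by (simp_all add: pos_def valid_append)
  then show ?thesis
    by (auto simp: inner_def degree_def valid_Cons_kids)
qed

lemma binary_inner_child_pos_iff:
  assumes "binary t" "no_deg1 t" "p \<in> inner t"
  shows "p @ [k] \<in> pos t \<longleftrightarrow> k < 2"
proof -
  have "degree t p = 2"
  proof -
    have "p \<in> pos t" "degree t p \<noteq> 0"
      using assms(3) unfolding inner_def by auto
    moreover from this(1) have "degree t p \<le> 2" "degree t p \<noteq> 1"
      using assms(1,2) unfolding binary_def no_deg1_def by blast+
    ultimately show ?thesis by linarith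
  qed
  then show ?thesis
    using assms(3) by (simp add: pos_def valid_snoc inner_def)
qed


section \<open>Maps that shift branch points by even distances\<close>

text \<open>A pre-embedding may send the nearest common ancestor of two nodes to an ancestor of the
  nearest common ancestor of their images, but only at even distance from it. This slack is
  what the reversal of a contraction needs: there the children of the removed node c branch two
  levels below the node a they get attached to.\<close>

abbreviation nca_evenly_above :: "(nat list \<Rightarrow> nat list) \<Rightarrow> nat list \<Rightarrow> nat list \<Rightarrow> bool" where
  "nca_evenly_above f u v \<equiv> f u \<parallel> f v \<and> prefix (f (nca u v)) (nca (f u) (f v))
    \<and> even (length (nca (f u) (f v))) = even (length (f (nca u v)))"

definition pre_embedding :: "rtree \<Rightarrow> rtree \<Rightarrow> (nat list \<Rightarrow> nat list) \<Rightarrow> bool" where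
  "pre_embedding S T f \<longleftrightarrow> (\<forall>p\<in>pos S. f p \<in> pos T)
    \<and> (\<forall>u\<in>pos S. \<forall>v\<in>pos S. prefix u v \<longrightarrow> prefix (f u) (f v))
    \<and> (\<forall>u\<in>pos S. \<forall>v\<in>pos S. u \<parallel> v \<longrightarrow> nca_evenly_above f u v)"

definition parity_embedding :: "rtree \<Rightarrow> rtree \<Rightarrow> (nat list \<Rightarrow> nat list) \<Rightarrow> bool" where
  "parity_embedding S T f \<longleftrightarrow> pre_embedding S T f
    \<and> (\<forall>p\<in>inner S. f p \<in> inner T \<and> even (length (f p)) = even (length p))"

context
  fixes S T f
  assumes f: "pre_embedding S T f"
begin

lemma pre_embedding_pos: "p \<in> pos S \<Longrightarrow> f p \<in> pos T"
  using f unfolding pre_embedding_def by blast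

lemma pre_embedding_prefix: "u \<in> pos S \<Longrightarrow> v \<in> pos S \<Longrightarrow> prefix u v \<Longrightarrow> prefix (f u) (f v)"
  using f unfolding pre_embedding_def by blast

lemma pre_embedding_parallel: "u \<in> pos S \<Longrightarrow> v \<in> pos S \<Longrightarrow> u \<parallel> v \<Longrightarrow> f u \<parallel> f v"
  using f unfolding pre_embedding_def by blast

lemma pre_embedding_nca:
  "u \<in> pos S \<Longrightarrow> v \<in> pos S \<Longrightarrow> u \<parallel> v \<Longrightarrow> prefix (f (nca u v)) (nca (f u) (f v))"
  using f unfolding pre_embedding_def by blast

lemma pre_embedding_nca_parity: "u \<in> pos S \<Longrightarrow> v \<in> pos S \<Longrightarrow> u \<parallel> v \<Longrightarrow>
    even (length (nca (f u) (f v))) = even (length (f (nca u v)))"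
  using f unfolding pre_embedding_def by blast

lemma pre_embedding_cong:
  assumes "\<And>p. p \<in> pos S \<Longrightarrow> g p = f p"
  shows "pre_embedding S T g"
  using f assms pos_nca unfolding pre_embedding_def by simp

end

lemma pre_embedding_append_root:
  assumes "pre_embedding S (subt T r) f" "r \<in> pos T"
  shows "pre_embedding S T (\<lambda>p. r @ f p)"
  using assms unfolding pre_embedding_def
  by (simp add: pos_append parallel_append_same nca_append_same)

lemma parity_embedding_inner:
  "parity_embedding S T f \<Longrightarrow> p \<in> inner S \<Longrightarrow>
    f p \<in> inner T \<and> even (length (f p)) = even (length p)"
  unfolding parity_embedding_def by blast

lemma parity_embedding_id: "parity_embedding t t id"
  unfolding parity_embedding_def pre_embedding_def by auto

lemma pre_embedding_comp:
  assumes f: "parity_embedding S T f" and g: "pre_embedding U S g"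
    and g_inner: "\<And>p. p \<in> inner U \<Longrightarrow> g p \<in> inner S"
  shows "pre_embedding U T (f \<circ> g)"
proof -
  have fe: "pre_embedding S T f"
    using f unfolding parity_embedding_def by blast
  have nca_fg: "prefix (f (g (nca u v))) (nca (f (g u)) (f (g v)))
      \<and> even (length (nca (f (g u)) (f (g v)))) = even (length (f (g (nca u v))))"
    if u: "u \<in> pos U" and v: "v \<in> pos U" and uv: "u \<parallel> v" for u v
  proof -
    define w' where "w' = nca (g u) (g v)"
    have gu: "g u \<in> pos S" and gv: "g v \<in> pos S" and gw: "g (nca u v) \<in> pos S"
      using pre_embedding_pos[OF g] u v pos_nca by auto
    have guv: "g u \<parallel> g v"
      using pre_embedding_parallel[OF g u v uv] .
    have w': "w' \<in> inner S"
      using strict_prefix_inner[OF gu strict_prefix_nca_left[OF guv]] unfolding w'_def .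
    have gw_inner: "g (nca u v) \<in> inner S"
      using g_inner strict_prefix_inner[OF u strict_prefix_nca_left[OF uv]] by blast
    have "prefix (f (g (nca u v))) (f w')"
      using pre_embedding_prefix[OF fe gw] pre_embedding_nca[OF g u v uv] w' unfolding w'_def
      by (simp add: inner_def)
    moreover have "prefix (f w') (nca (f (g u)) (f (g v)))"
      using pre_embedding_nca[OF fe gu gv guv] unfolding w'_def .
    moreover have "even (length (nca (f (g u)) (f (g v)))) = even (length (f w'))"
      using pre_embedding_nca_parity[OF fe gu gv guv] unfolding w'_def .
    ultimately show ?thesis
      using parity_embedding_inner[OF f] w' gw_inner pre_embedding_nca_parity[OF g u v uv]
      unfolding w'_def by (auto intro: prefix_order.trans)
  qed
  show ?thesis
    unfolding pre_embedding_def
    using pre_embedding_pos[OF fe] pre_embedding_pos[OF g] pre_embedding_prefix[OF fe]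
      pre_embedding_prefix[OF g] pre_embedding_parallel[OF fe] pre_embedding_parallel[OF g] nca_fg
    by simp
qed

lemma parity_embedding_comp:
  assumes "parity_embedding S T f" "parity_embedding U S g"
  shows "parity_embedding U T (f \<circ> g)"
  using pre_embedding_comp[OF assms(1)] assms parity_embedding_inner[OF assms(1)]
  unfolding parity_embedding_def by auto

definition graft :: "(nat \<Rightarrow> nat list) \<Rightarrow> (nat \<Rightarrow> nat list \<Rightarrow> nat list) \<Rightarrow> nat list \<Rightarrow> nat list"
  where "graft P G p = (case p of [] \<Rightarrow> [] | j # q \<Rightarrow> P j @ G j q)"

lemma graft_simps [simp]:
  "graft P G [] = []"
  "graft P G (j # q) = P j @ G j q"
  by (simp_all add: graft_def)

lemma nca_evenly_above_graft_same_child: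
  assumes "pre_embedding (bs ! j) (subt A (P j)) (G j)"
    and "u \<in> pos (bs ! j)" "v \<in> pos (bs ! j)" "u \<parallel> v"
  shows "nca_evenly_above (graft P G) (j # u) (j # v)"
proof -
  have "G j u \<parallel> G j v" "prefix (G j (nca u v)) (nca (G j u) (G j v))"
    "even (length (nca (G j u) (G j v))) = even (length (G j (nca u v)))"
    using pre_embedding_parallel pre_embedding_nca pre_embedding_nca_parity assms by blast+
  then show ?thesis
    by (simp add: parallel_append_same nca_append_same)
qed

lemma nca_evenly_above_graft_distinct_children:
  assumes "P j \<parallel> P k" "even (length (nca (P j) (P k)))" "j \<noteq> k"
  shows "nca_evenly_above (graft P G) (j # u) (k # v)"
proof -
  have "nca (P j @ G j u) (P k @ G k v) = nca (P j) (P k)"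
    by (rule nca_parallel_extend[OF _ _ \<open>P j \<parallel> P k\<close>]) simp_all
  then show ?thesis
    using assms parallel_append[OF \<open>P j \<parallel> P k\<close>, of "G j u" "G k v"] by simp
qed

lemma pre_embedding_graft:
  assumes P_pos: "\<And>j. j < length bs \<Longrightarrow> P j \<in> pos A"
    and G: "\<And>j. j < length bs \<Longrightarrow> pre_embedding (bs ! j) (subt A (P j)) (G j)"
    and P_parallel: "\<And>j k. j < length bs \<Longrightarrow> k < length bs \<Longrightarrow> j \<noteq> k \<Longrightarrow>
      P j \<parallel> P k \<and> even (length (nca (P j) (P k)))"
  shows "pre_embedding (Nd bs) A (graft P G)"
proof -
  have pos: "graft P G p \<in> pos A" if "p \<in> pos (Nd bs)" for p
    using that P_pos pre_embedding_pos[OF G] by (cases p) (auto simp: pos_Cons pos_append)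
  have prefix: "prefix (graft P G u) (graft P G v)"
    if "u \<in> pos (Nd bs)" "v \<in> pos (Nd bs)" "prefix u v" for u v
  proof (cases u)
    case (Cons j u')
    with that(3) obtain v' where "v = j # v'" "prefix u' v'"
      by (metis Cons_prefix_Cons prefix_def append_Cons)
    with that Cons show ?thesis
      using pre_embedding_prefix[OF G] by (auto simp: pos_Cons)
  qed simp
  have "nca_evenly_above (graft P G) u v"
    if "u \<in> pos (Nd bs)" "v \<in> pos (Nd bs)" "u \<parallel> v" for u v
  proof -
    obtain j u' k v' where u: "u = j # u'" and v: "v = k # v'"
      using \<open>u \<parallel> v\<close> by (cases u; cases v) simp_all
    show ?thesis
    proof (cases "j = k")
      case True
      with that show ?thesis
        using nca_evenly_above_graft_same_child[where P = P and G = G and j = j and u = u' and v = v']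
          G[of j] unfolding u v
        by (simp add: pos_Cons parallel_Cons_iff)
    next
      case False
      with that show ?thesis
        using nca_evenly_above_graft_distinct_children[where j = j and k = k] P_parallel[of j k]
        unfolding u v
        by (simp add: pos_Cons)
    qed
  qed
  with pos prefix show ?thesis
    unfolding pre_embedding_def by blast
qed

lemma parity_embedding_graft:
  assumes P_pos: "\<And>j. j < length bs \<Longrightarrow> P j \<in> pos A"
    and P_nonempty: "\<And>j. j < length bs \<Longrightarrow> P j \<noteq> []"
    and P_odd: "\<And>j. j < length bs \<Longrightarrow> kids (bs ! j) \<noteq> [] \<Longrightarrow> odd (length (P j))"
    and G: "\<And>j. j < length bs \<Longrightarrow> parity_embedding (bs ! j) (subt A (P j)) (G j)"
    and P_parallel: "\<And>j k. j < length bs \<Longrightarrow> k < length bs \<Longrightarrow> j \<noteq> k \<Longrightarrow>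
      P j \<parallel> P k \<and> even (length (nca (P j) (P k)))"
  shows "parity_embedding (Nd bs) A (graft P G)"
proof -
  have "pre_embedding (Nd bs) A (graft P G)"
  proof (rule pre_embedding_graft)
    show "pre_embedding (bs ! j) (subt A (P j)) (G j)" if "j < length bs" for j
      using G[OF that] unfolding parity_embedding_def by blast
  qed (fact P_pos P_parallel)+
  moreover have "graft P G p \<in> inner A \<and> even (length (graft P G p)) = even (length p)"
    if "p \<in> inner (Nd bs)" for p
  proof (cases p)
    case Nil
    then have "0 < length bs"
      using that by (simp add: inner_Nil)
    then have "strict_prefix [] (P 0)" "P 0 \<in> pos A"
      using P_pos P_nonempty[OF \<open>0 < length bs\<close>] by (simp_all add: strict_prefix_def)
    with Nil show ?thesis
      using strict_prefix_inner by auto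
  next
    case (Cons j q)
    with that have j: "j < length bs" and q: "q \<in> inner (bs ! j)"
      by (auto simp: inner_Cons)
    then show ?thesis
      using Cons P_pos P_odd[OF j kids_nonempty_if_inner[OF q]] parity_embedding_inner[OF G q]
      by (auto simp: inner_append)
  qed
  ultimately show ?thesis
    unfolding parity_embedding_def by blast
qed

lemma parity_embedding_reindex:
  assumes "inj_on \<sigma> {..<length bs}" "\<And>j. j < length bs \<Longrightarrow> \<sigma> j < length ts"
    and "\<And>j. j < length bs \<Longrightarrow> parity_embedding (bs ! j) (ts ! \<sigma> j) (G j)"
  shows "parity_embedding (Nd bs) (Nd ts) (graft (\<lambda>j. [\<sigma> j]) G)"
proof (rule parity_embedding_graft)
  show "[\<sigma> j] \<parallel> [\<sigma> k] \<and> even (length (nca [\<sigma> j] [\<sigma> k]))"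
    if "j < length bs" "k < length bs" "j \<noteq> k" for j k
    using assms(1) that unfolding inj_on_def by (auto simp: parallel_def)
qed (use assms(2,3) in \<open>auto simp: pos_def\<close>)

section \<open>Reversing cuts, contractions and isomorphisms\<close>

lemma parity_embedding_cut:
  assumes "i < length ts"
  shows "parity_embedding (Nd (take i ts @ drop (Suc i) ts)) (Nd ts)
    (graft (\<lambda>j. [if j < i then j else Suc j]) (\<lambda>_. id))"
  by (rule parity_embedding_reindex)
    (use assms in \<open>auto simp: inj_on_def nth_append min_def parity_embedding_id\<close>)

lemma parity_embedding_contr_leaf:
  assumes "i < length ts" "ts ! i = Nd [Nd []]"
  shows "parity_embedding (Nd (ts[i := Nd []])) (Nd ts)
    (graft (\<lambda>j. if j = i then [i, 0] else [j]) (\<lambda>_. id))"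
proof (rule parity_embedding_graft)
  show "(if j = i then [i, 0] else [j]) \<parallel> (if k = i then [i, 0] else [k]) \<and>
      even (length (nca (if j = i then [i, 0] else [j]) (if k = i then [i, 0] else [k])))"
    if "j \<noteq> k" for j k
    using that by (simp add: Cons_parallelI1)
qed (use assms in \<open>auto simp: pos_def parity_embedding_id\<close>)

lemma parity_embedding_contr_inner:
  assumes "i < length ts" "ts ! i = Nd [Nd cs]"
  defines "P \<equiv> \<lambda>j. if j < i then [j] else if j < i + length cs then [i, 0, j - i]
    else [j - length cs + 1]"
  shows "parity_embedding (Nd (take i ts @ cs @ drop (Suc i) ts)) (Nd ts) (graft P (\<lambda>_. id))"
proof (rule parity_embedding_graft)
  fix j
  assume "j < length (take i ts @ cs @ drop (Suc i) ts)"
  then have "P j \<in> pos (Nd ts) \<and> (take i ts @ cs @ drop (Suc i) ts) ! j = subt (Nd ts) (P j)"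
    using assms by (auto simp: P_def pos_def nth_append)
  then show "P j \<in> pos (Nd ts)"
    and "parity_embedding ((take i ts @ cs @ drop (Suc i) ts) ! j) (subt (Nd ts) (P j)) id"
    using parity_embedding_id by simp_all
  show "P j \<noteq> []" "odd (length (P j))"
    by (simp_all add: P_def)
next
  fix j k :: nat
  assume "j \<noteq> k"
  show "P j \<parallel> P k \<and> even (length (nca (P j) (P k)))"
  proof (cases "i \<le> j \<and> j < i + length cs \<and> i \<le> k \<and> k < i + length cs")
    case True
    with \<open>j \<noteq> k\<close> have "P j = [i, 0, j - i]" "P k = [i, 0, k - i]" "j - i \<noteq> k - i"
      by (auto simp: P_def)
    then show ?thesis
      by (simp add: Cons_parallelI1 Cons_parallelI2)
  next
    case False
    with \<open>j \<noteq> k\<close> have "hd (P j) \<noteq> hd (P k)" "P j = hd (P j) # tl (P j)" "P k = hd (P k) # tl (P k)"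
      by (auto simp: P_def)
    then have "P j \<parallel> P k" "nca (P j) (P k) = []"
      by (metis Cons_parallelI1, metis nca.simps(1))
    then show ?thesis
      by simp
  qed
qed

lemma parity_embedding_deep:
  assumes "i < length ts" "parity_embedding t (ts ! i) g"
  shows "parity_embedding (Nd (ts[i := t])) (Nd ts) (graft (\<lambda>j. [j]) (\<lambda>j. if j = i then g else id))"
  using assms
  by (intro parity_embedding_reindex[of id, simplified]) (auto simp: nth_list_update parity_embedding_id)

lemma op_step_parity_embedding: "op_step T S \<Longrightarrow> \<exists>f. parity_embedding S T f"
proof (induction rule: op_step.induct)
  case (cut i ts)
  then show ?case using parity_embedding_cut by blast
next
  case (contr_leaf i ts)
  then show ?case using parity_embedding_contr_leaf by blast
next
  case (contr_inner i ts cs)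
  then show ?case using parity_embedding_contr_inner by blast
next
  case (deep i ts t)
  then show ?case using parity_embedding_deep by blast
qed

lemma tiso_parity_embedding: "tiso S U \<Longrightarrow> \<exists>f. parity_embedding U S f"
proof (induction rule: tiso.induct)
  case (1 \<sigma> ts us)
  define \<tau> where "\<tau> = inv_into {..<length ts} \<sigma>"
  have \<tau>: "\<tau> j < length ts" "\<sigma> (\<tau> j) = j" if "j < length us" for j
  proof -
    have "j \<in> \<sigma> ` {..<length ts}"
      using 1(1) that by (simp add: bij_betw_def)
    then have "\<tau> j \<in> {..<length ts}" "\<sigma> (\<tau> j) = j"
      unfolding \<tau>_def by (rule inv_into_into, rule f_inv_into_f)
    then show "\<tau> j < length ts" "\<sigma> (\<tau> j) = j"
      by simp_all
  qed
  obtain G where G: "\<And>i. i < length ts \<Longrightarrow> parity_embedding (us ! \<sigma> i) (ts ! i) (G i)"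
    using 1(2) by metis
  have "inj_on \<tau> {..<length us}"
    by (metis inj_onI lessThan_iff \<tau>(2))
  then have "parity_embedding (Nd us) (Nd ts) (graft (\<lambda>j. [\<tau> j]) (\<lambda>j. G (\<tau> j)))"
  proof (rule parity_embedding_reindex)
    show "parity_embedding (us ! j) (ts ! \<tau> j) (G (\<tau> j))" if "j < length us" for j
      using G[OF \<tau>(1)[OF that]] \<tau>(2)[OF that] by simp
  qed (fact \<tau>(1))
  then show ?case by blast
qed

lemma implements_parity_embedding:
  assumes "implements T S"
  shows "\<exists>f. parity_embedding S T f"
proof -
  obtain S' where steps: "op_step\<^sup>*\<^sup>* T S'" and iso: "tiso S' S"
    using assms unfolding implements_def by blast
  from steps have "\<exists>f. parity_embedding S' T f"
  proof (induction rule: rtranclp_induct)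
    case base
    then show ?case using parity_embedding_id by blast
  next
    case (step y z)
    then show ?case using op_step_parity_embedding parity_embedding_comp by blast
  qed
  then show ?thesis
    using tiso_parity_embedding[OF iso] parity_embedding_comp by blast
qed

section \<open>Padding a tree to prescribed depth parities\<close>

lemma size_nth_less_size_list: "i < length ts \<Longrightarrow> size (ts ! i) < Suc (size_list size ts)"
  using size_list_estimation'[of "ts ! i" ts "size (ts ! i)" size] nth_mem by fastforce

text \<open>In \<open>parity_pad c d t\<close> the root of \<open>t\<close> sits at depth \<open>d\<close>, and \<open>c p = 0\<close> requests an even
  depth for the inner node \<open>p\<close>, any other value an odd one.\<close>

function parity_pad :: "(nat list \<Rightarrow> nat) \<Rightarrow> nat \<Rightarrow> rtree \<Rightarrow> rtree" where
  "parity_pad c d (Nd ts) = (if ts = [] then Nd [] else if (c [] = 0) = even d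
     then Nd (map (\<lambda>i. parity_pad (\<lambda>q. c (i # q)) (Suc d) (ts ! i)) [0..<length ts])
     else Nd [Nd (map (\<lambda>i. parity_pad (\<lambda>q. c (i # q)) (Suc (Suc d)) (ts ! i)) [0..<length ts]), Nd []])"
  by pat_completeness auto
termination
  by (relation "measure (\<lambda>(c, d, t). size t)") (auto simp: size_nth_less_size_list)

fun parity_pad_map :: "(nat list \<Rightarrow> nat) \<Rightarrow> nat \<Rightarrow> rtree \<Rightarrow> nat list \<Rightarrow> nat list" where
  "parity_pad_map c d (Nd ts) [] = (if ts \<noteq> [] \<and> (c [] = 0) \<noteq> even d then [0] else [])"
| "parity_pad_map c d (Nd ts) (i # q) = (if i < length ts then
     (if (c [] = 0) = even d then [] else [0]) @
     i # parity_pad_map (\<lambda>q. c (i # q)) (if (c [] = 0) = even d then Suc d else Suc (Suc d)) (ts ! i) q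
     else [])"

lemma parity_pad_Nd:
  assumes "ts \<noteq> []" "r = (if (c [] = 0) = even d then [] else [0])" "e = d + length r + 1"
  shows "r \<in> pos (parity_pad c d (Nd ts))"
    and "[] \<in> inner (subt (parity_pad c d (Nd ts)) r)"
    and "j < length ts \<Longrightarrow> [j] \<in> pos (subt (parity_pad c d (Nd ts)) r)"
    and "j < length ts \<Longrightarrow>
      subt (subt (parity_pad c d (Nd ts)) r) [j] = parity_pad (\<lambda>q. c (j # q)) e (ts ! j)"
    and "even (d + length r) \<longleftrightarrow> c [] = 0"
    and "parity_pad_map c d (Nd ts) [] = r"
    and "j < length ts \<Longrightarrow>
      parity_pad_map c d (Nd ts) (j # q) = r @ [j] @ parity_pad_map (\<lambda>q. c (j # q)) e (ts ! j) q"
  using assms by (auto simp: pos_def inner_Nil)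

lemma pre_embedding_parity_pad_map: "pre_embedding t (parity_pad c d t) (parity_pad_map c d t)"
proof (induction t arbitrary: c d)
  case (Nd ts)
  show ?case
  proof (cases "ts = []")
    case True
    have "pre_embedding (Nd ts) (parity_pad c d (Nd ts)) (graft (\<lambda>_. []) (\<lambda>_. id))"
      by (rule pre_embedding_graft) (use True in simp_all)
    then show ?thesis
      by (rule pre_embedding_cong) (use True in \<open>auto simp: pos_def elim: valid.elims\<close>)
  next
    case False
    define r where "r = (if (c [] = 0) = even d then [] else [0::nat])"
    define e where "e = d + length r + 1"
    define G where "G j = parity_pad_map (\<lambda>q. c (j # q)) e (ts ! j)" for j
    note root = parity_pad_Nd[where c = c and d = d, OF False r_def e_def, folded G_def]
    have "pre_embedding (Nd ts) (subt (parity_pad c d (Nd ts)) r) (graft (\<lambda>j. [j]) G)"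
    proof (rule pre_embedding_graft)
      show "pre_embedding (ts ! j) (subt (subt (parity_pad c d (Nd ts)) r) [j]) (G j)"
        if "j < length ts" for j
        using Nd.IH[OF nth_mem[OF that]] root(4)[OF that] unfolding G_def by simp
    qed (use root(3) in \<open>auto simp: Cons_parallelI1\<close>)
    then have "pre_embedding (Nd ts) (parity_pad c d (Nd ts)) (\<lambda>p. r @ graft (\<lambda>j. [j]) G p)"
      using pre_embedding_append_root root(1) by blast
    then show ?thesis
    proof (rule pre_embedding_cong)
      show "parity_pad_map c d (Nd ts) p = r @ graft (\<lambda>j. [j]) G p" if "p \<in> pos (Nd ts)" for p
        using that by (cases p) (auto simp del: parity_pad_map.simps simp: root(6,7) pos_Cons)
    qed
  qed
qed

lemma parity_pad_map_inner:
  "p \<in> inner t \<Longrightarrow> parity_pad_map c d t p \<in> inner (parity_pad c d t) \<and>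
    even (d + length (parity_pad_map c d t p)) = (c p = 0)"
proof (induction t arbitrary: c d p)
  case (Nd ts)
  have ts: "ts \<noteq> []"
    using kids_nonempty_if_inner[OF Nd.prems] by simp
  define r where "r = (if (c [] = 0) = even d then [] else [0::nat])"
  define e where "e = d + length r + 1"
  note root = parity_pad_Nd[where c = c and d = d, OF ts r_def e_def]
  show ?case
  proof (cases p)
    case Nil
    have "r @ [] \<in> inner (parity_pad c d (Nd ts))"
      unfolding inner_append using root(1,2) by simp
    then show ?thesis
      using Nil root(5,6) by simp
  next
    case (Cons j q)
    with Nd.prems have j: "j < length ts" and q: "q \<in> inner (ts ! j)"
      by (auto simp: inner_Cons)
    let ?G = "parity_pad_map (\<lambda>q. c (j # q)) e (ts ! j) q"
    have "?G \<in> inner (parity_pad (\<lambda>q. c (j # q)) e (ts ! j))"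
      and parity: "even (e + length ?G) = (c (j # q) = 0)"
      using Nd.IH[OF nth_mem[OF j] q] by auto
    then have "r @ [j] @ ?G \<in> inner (parity_pad c d (Nd ts))"
      unfolding inner_append using root(1) root(3,4)[OF j] by simp
    moreover have "d + length (r @ [j] @ ?G) = e + length ?G"
      by (simp add: e_def)
    then have "even (d + length (r @ [j] @ ?G)) = (c p = 0)"
      using parity Cons by (simp only:)
    ultimately show ?thesis
      using Cons root(7)[OF j] by (simp del: parity_pad_map.simps)
  qed
qed

fun leaf_count :: "rtree \<Rightarrow> nat" where
  "leaf_count (Nd ts) = (if ts = [] then 1 else sum_list (map leaf_count ts))"

lemma leaves_Nd:
  "leaves (Nd ts) = (if ts = [] then {[]} else (\<Union>i<length ts. Cons i ` leaves (ts ! i)))"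
proof -
  have "p \<in> leaves (Nd ts) \<longleftrightarrow> p \<in> (if ts = [] then {[]} else (\<Union>i<length ts. Cons i ` leaves (ts ! i)))"
    for p
    by (cases p) (auto simp: leaves_def pos_Cons degree_Cons degree_def pos_def)
  then show ?thesis by blast
qed

lemma card_leaves: "finite (leaves t) \<and> card (leaves t) = leaf_count t"
proof (induction t)
  case (Nd ts)
  show ?case
  proof (cases "ts = []")
    case False
    have fin: "finite (leaves (ts ! i))" "card (leaves (ts ! i)) = leaf_count (ts ! i)"
      if "i < length ts" for i
      using Nd.IH[OF nth_mem[OF that]] by auto
    have "card (\<Union>i<length ts. Cons i ` leaves (ts ! i)) = (\<Sum>i<length ts. card (Cons i ` leaves (ts ! i)))"
      by (rule card_UN_disjoint) (auto simp: fin)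
    also have "\<dots> = (\<Sum>i<length ts. leaf_count (ts ! i))"
      by (rule sum.cong) (auto simp: card_image fin)
    also have "\<dots> = sum_list (map leaf_count ts)"
      by (simp add: sum_list_sum_nth lessThan_atLeast0)
    finally show ?thesis
      using False fin by (simp add: leaves_Nd)
  qed (simp add: leaves_Nd)
qed

lemma all_pos_degree_Nd:
  "(\<forall>p\<in>pos (Nd ts). Q (degree (Nd ts) p)) \<longleftrightarrow>
    Q (length ts) \<and> (\<forall>i<length ts. \<forall>p\<in>pos (ts ! i). Q (degree (ts ! i) p))"
proof
  assume all: "\<forall>p\<in>pos (Nd ts). Q (degree (Nd ts) p)"
  have "Q (degree (ts ! i) p)" if "i < length ts" "p \<in> pos (ts ! i)" for i p
    using all[rule_format, of "i # p"] that by (simp add: pos_Cons degree_Cons)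
  moreover have "Q (degree (Nd ts) [])"
    using all by simp
  ultimately show "Q (length ts) \<and> (\<forall>i<length ts. \<forall>p\<in>pos (ts ! i). Q (degree (ts ! i) p))"
    by (simp add: degree_def)
next
  assume "Q (length ts) \<and> (\<forall>i<length ts. \<forall>p\<in>pos (ts ! i). Q (degree (ts ! i) p))"
  then show "\<forall>p\<in>pos (Nd ts). Q (degree (Nd ts) p)"
    by (intro ballI, case_tac p) (auto simp: pos_Cons degree_Cons degree_def)
qed

lemma no_deg1_Nd: "no_deg1 (Nd ts) \<longleftrightarrow> length ts \<noteq> 1 \<and> (\<forall>i<length ts. no_deg1 (ts ! i))"
  unfolding no_deg1_def by (rule all_pos_degree_Nd)

lemma binary_Nd: "binary (Nd ts) \<longleftrightarrow> length ts \<le> 2 \<and> (\<forall>i<length ts. binary (ts ! i))"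
  unfolding binary_def by (rule all_pos_degree_Nd)

lemma no_deg1_parity_pad: "no_deg1 t \<Longrightarrow> no_deg1 (parity_pad c d t)"
proof (induction t arbitrary: c d)
  case (Nd ts)
  then have "no_deg1 (Nd (map (\<lambda>i. parity_pad (\<lambda>q. c (i # q)) e (ts ! i)) [0..<length ts]))" for e
    by (simp add: no_deg1_Nd)
  moreover have "no_deg1 (Nd [])"
    by (simp add: no_deg1_Nd)
  ultimately show ?case
    by (simp add: no_deg1_Nd less_Suc_eq)
qed

lemma leaf_count_pos: "1 \<le> leaf_count t"
proof (induction t)
  case (Nd ts)
  then show ?case
    by (cases ts) (simp_all add: trans_le_add1)
qed

text \<open>Each of the \<open>n - 1\<close> inner nodes of a binary tree with \<open>n\<close> leaves gains at most one leaf.\<close>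

lemma leaf_count_parity_pad:
  "binary t \<Longrightarrow> no_deg1 t \<Longrightarrow> leaf_count (parity_pad c d t) + 1 \<le> 2 * leaf_count t"
proof (induction t arbitrary: c d)
  case (Nd ts)
  show ?case
  proof (cases "ts = []")
    case False
    with Nd.prems obtain a b where ab: "ts = [a, b]"
      unfolding no_deg1_Nd binary_Nd
      by (metis One_nat_def Suc_1 le_Suc_eq le_zero_eq length_0_conv length_Suc_conv)
    define e where "e = (if (c [] = 0) = even d then Suc d else Suc (Suc d))"
    have "leaf_count (parity_pad c d (Nd ts)) \<le>
        leaf_count (parity_pad (\<lambda>q. c (0 # q)) e a) + leaf_count (parity_pad (\<lambda>q. c (1 # q)) e b) + 1"
      using ab by (simp add: upt_rec e_def leaf_count_pos)
    moreover have IH: "leaf_count (parity_pad c' e a) + 1 \<le> 2 * leaf_count a"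
      "leaf_count (parity_pad c' e b) + 1 \<le> 2 * leaf_count b" for c'
      using Nd ab by (simp_all add: no_deg1_Nd binary_Nd less_Suc_eq)
    moreover have "leaf_count (Nd ts) = leaf_count a + leaf_count b"
      using ab by simp
    ultimately show ?thesis
      using IH(1)[of "\<lambda>q. c (0 # q)"] IH(2)[of "\<lambda>q. c (1 # q)"] by linarith
  qed simp
qed

section \<open>Exact embeddings of binary trees\<close>

text \<open>Moving the image of each inner node down to the nearest common ancestor of the images of its
  two children turns a pre-embedding of a binary tree into a map that preserves nearest common
  ancestors exactly; the move is by an even distance, so depth parities are kept.\<close>

definition child_nca_map :: "rtree \<Rightarrow> (nat list \<Rightarrow> nat list) \<Rightarrow> nat list \<Rightarrow> nat list" where
  "child_nca_map S H p = (if p \<in> inner S then nca (H (p @ [0])) (H (p @ [1])) else H p)"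

lemma nca_snoc_0_1: "p @ [0] \<parallel> p @ [1]" "nca (p @ [0]) (p @ [1]) = p"
  by (simp_all add: parallel_append_same Cons_parallelI1 nca_append_same)

context
  fixes S T H
  assumes H: "pre_embedding S T H" and binary: "binary S" and no_deg1: "no_deg1 S"
begin

private abbreviation (input) F where "F \<equiv> child_nca_map S H"

lemma child_nca_map_inner:
  assumes "p \<in> inner S"
  shows "H (p @ [0]) \<parallel> H (p @ [1])" "prefix (H p) (F p)" "even (length (F p)) = even (length (H p))"
proof -
  have p0: "p @ [0] \<in> pos S" and p1: "p @ [1] \<in> pos S"
    using binary_inner_child_pos_iff[OF binary no_deg1 assms] by simp_all
  have F: "F p = nca (H (p @ [0])) (H (p @ [1]))"
    using assms by (simp add: child_nca_map_def)
  show "H (p @ [0]) \<parallel> H (p @ [1])"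
    using pre_embedding_parallel[OF H p0 p1 nca_snoc_0_1(1)] .
  show "prefix (H p) (F p)"
    using pre_embedding_nca[OF H p0 p1 nca_snoc_0_1(1)] unfolding F nca_snoc_0_1(2) .
  show "even (length (F p)) = even (length (H p))"
    using pre_embedding_nca_parity[OF H p0 p1 nca_snoc_0_1(1)] unfolding F nca_snoc_0_1(2) .
qed

lemma prefix_child_nca_map: "prefix (H p) (F p)"
  using child_nca_map_inner(2) by (cases "p \<in> inner S") (auto simp: child_nca_map_def)

lemma child_nca_map_pos: "p \<in> pos S \<Longrightarrow> F p \<in> pos T"
  using pre_embedding_pos[OF H] binary_inner_child_pos_iff[OF binary no_deg1] pos_nca
  by (auto simp: child_nca_map_def)

lemma strict_prefix_child_nca_map_child:
  assumes "p \<in> inner S" "a < 2"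
  shows "strict_prefix (F p) (H (p @ [a]))"
proof -
  have "F p = nca (H (p @ [0])) (H (p @ [1]))"
    using assms(1) by (simp add: child_nca_map_def)
  moreover have "a = 0 \<or> a = 1"
    using assms(2) by auto
  ultimately show ?thesis
    using strict_prefix_nca_left strict_prefix_nca_right child_nca_map_inner(1)[OF assms(1)]
    by auto
qed

lemma prefix_child_image_child_nca_map:
  "p @ [a] \<in> pos S \<Longrightarrow> q \<in> pos S \<Longrightarrow> prefix (p @ [a]) q \<Longrightarrow> prefix (H (p @ [a])) (F q)"
  using pre_embedding_prefix[OF H] prefix_child_nca_map prefix_order.trans by blast

lemma strict_prefix_child_nca_map:
  assumes "u \<in> pos S" "v \<in> pos S" "strict_prefix u v"
  shows "strict_prefix (F u) (F v)"
proof -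
  obtain a r where v: "v = u @ a # r"
    using assms(3) by (metis prefix_def strict_prefix_def self_append_conv neq_Nil_conv)
  have u: "u \<in> inner S"
    using strict_prefix_inner assms(2,3) by blast
  have ua: "u @ [a] \<in> pos S"
    using pos_prefix[OF assms(2)] v by simp
  then have "a < 2"
    using binary_inner_child_pos_iff[OF binary no_deg1 u] by blast
  moreover have "prefix (H (u @ [a])) (F v)"
    using prefix_child_image_child_nca_map[OF ua assms(2)] v by simp
  ultimately show ?thesis
    using strict_prefix_child_nca_map_child[OF u] prefix_order.less_le_trans by blast
qed

lemma child_nca_map_nca_parallel:
  assumes u: "u \<in> pos S" and v: "v \<in> pos S" and "u \<parallel> v"
  shows "F (nca u v) = nca (F u) (F v) \<and> F u \<parallel> F v"
proof -
  define w where "w = nca u v"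
  obtain a b x y where "a \<noteq> b" and u': "u = w @ a # x" and v': "v = w @ b # y"
    by (rule parallel_nca_decomp[OF \<open>u \<parallel> v\<close>, folded w_def])
  have w: "w \<in> inner S"
    using strict_prefix_inner[OF u strict_prefix_nca_left[OF \<open>u \<parallel> v\<close>]] unfolding w_def .
  have wa: "w @ [a] \<in> pos S" and wb: "w @ [b] \<in> pos S"
    using pos_prefix[OF u] pos_prefix[OF v] unfolding u' v' by simp_all
  then have "a < 2" "b < 2"
    using binary_inner_child_pos_iff[OF binary no_deg1 w] by simp_all
  with \<open>a \<noteq> b\<close> have ab: "a = 0 \<and> b = 1 \<or> a = 1 \<and> b = 0"
    by arith
  have pa: "prefix (H (w @ [a])) (F u)" and pb: "prefix (H (w @ [b])) (F v)"
    using prefix_child_image_child_nca_map[OF wa u] prefix_child_image_child_nca_map[OF wb v]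
    unfolding u' v' by simp_all
  have Fw: "F w = nca (H (w @ [0])) (H (w @ [1]))"
    using w by (simp add: child_nca_map_def)
  have par: "H (w @ [a]) \<parallel> H (w @ [b])" and nca_ab: "nca (H (w @ [a])) (H (w @ [b])) = F w"
    using ab child_nca_map_inner(1)[OF w] unfolding Fw
    by (auto simp: parallel_commute nca_commute)
  show ?thesis
    using nca_parallel_extend[OF pa pb par] parallel_extend[OF par pa pb] nca_ab
    unfolding w_def by simp
qed

lemma child_nca_map_nca:
  assumes u: "u \<in> pos S" and v: "v \<in> pos S"
  shows "F (nca u v) = nca (F u) (F v) \<and> (u \<noteq> v \<longrightarrow> F u \<noteq> F v)"
proof (cases u v rule: prefix_cases)
  case 1
  show ?thesis
  proof (cases "u = v")
    case False
    with 1 have "strict_prefix (F u) (F v)"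
      using strict_prefix_child_nca_map[OF u v] by simp
    with 1 False show ?thesis
      by (simp add: nca_prefix_eq)
  qed (simp add: nca_prefix_eq)
next
  case 2
  show ?thesis
  proof (cases "u = v")
    case False
    with 2 have "strict_prefix (F v) (F u)"
      using strict_prefix_child_nca_map[OF v u] by simp
    with 2 False show ?thesis
      by (simp add: nca_prefix_eq nca_commute[of u] nca_commute[of "F u"])
  qed (simp add: nca_prefix_eq)
next
  case 3
  then have "F (nca u v) = nca (F u) (F v)" "F u \<parallel> F v"
    using child_nca_map_nca_parallel[OF u v] by simp_all
  then show ?thesis
    unfolding parallel_def by auto
qed

end

theorem lemma15:
  fixes T T' :: rtree and n :: nat and c :: "nat list \<Rightarrow> nat"
  assumes "universal (2 * n - 1) T"
    and "binary T'" and "no_deg1 T'" and "card (leaves T') = n"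
    and "\<forall>v \<in> inner T'. c v \<in> {0, 1}"
  shows "\<exists>f. f ` pos T' \<subseteq> pos T \<and> inj_on f (pos T')
     \<and> (\<forall>u \<in> pos T'. \<forall>v \<in> pos T'. f (nca u v) = nca (f u) (f v))
     \<and> (\<forall>v \<in> inner T'. c v = 0 \<longrightarrow> even (depth (f v)))
     \<and> (\<forall>v \<in> inner T'. c v = 1 \<longrightarrow> odd (depth (f v)))"
proof -
  define T2 where "T2 = parity_pad c 0 T'"
  have "card (leaves T2) \<le> 2 * n - 1"
    using card_leaves[of T2] card_leaves[of T'] assms(4) leaf_count_parity_pad[OF assms(2,3), of c 0]
    unfolding T2_def by simp
  then obtain h where h: "parity_embedding T2 T h"
    using assms(1) no_deg1_parity_pad[OF assms(3)] implements_parity_embedding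
    unfolding universal_def T2_def by blast
  define g where "g = parity_pad_map c 0 T'"
  have g: "pre_embedding T' T2 g"
    using pre_embedding_parity_pad_map unfolding g_def T2_def .
  have g_inner: "g p \<in> inner T2 \<and> even (length (g p)) = (c p = 0)" if "p \<in> inner T'" for p
    using parity_pad_map_inner[OF that, of c 0] unfolding g_def T2_def by simp
  have H: "pre_embedding T' T (h \<circ> g)"
    using pre_embedding_comp[OF h g] g_inner by blast
  define F where "F = child_nca_map T' (h \<circ> g)"
  have nca: "F (nca u v) = nca (F u) (F v) \<and> (u \<noteq> v \<longrightarrow> F u \<noteq> F v)" if "u \<in> pos T'" "v \<in> pos T'" for u v
    using child_nca_map_nca[OF H assms(2,3) that] unfolding F_def .
  have parity: "even (depth (F p)) = (c p = 0)" if "p \<in> inner T'" for p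
    using child_nca_map_inner(3)[OF H assms(2,3) that] parity_embedding_inner[OF h] g_inner[OF that]
    unfolding F_def depth_def by simp
  show ?thesis
  proof (intro exI conjI)
    show "F ` pos T' \<subseteq> pos T"
      using child_nca_map_pos[OF H assms(2,3)] unfolding F_def by blast
    show "inj_on F (pos T')"
      using nca by (meson inj_onI)
  qed (use nca parity in auto)
qed

end
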